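(* Let $P=(I,J,K)$ be a reduced presentation and let $a\in I$. Then $\mathbf{\L}_a$ is embeddable in $\mathbf B_\Delta$.
   Context: Wajsberg hoops: basic hoops satisfying $(x\to y)\to y\approx(y\to x)\to x$. $\Gamma(\mathbf G,u)$ is the Wajsberg hoop on $[0,u]$ with $ab=\max\{a+b-u,0\}$, $a\to b=\min\{u-a+b,u\}$; $\mathbf{\L}_n=\Gamma(\mathbb Z,n)$ (elements $0,\dots,n$), $\mathbf{\L}_{n,k}=\Gamma(\mathbb Z\times_l\mathbb Z,(n,k))$ (lexicographic order), $\mathbf{\L}_n^\infty=\mathbf{\L}_{n,0}$, $\mathbf C_\omega$ the negative cone of $\mathbb Z$, i.e. the free monoid on one generator $c$ with $c^l\to c^m=c^{\max(l-m,0)}$. In a bounded Wajsberg hoop, $\neg a=a\to0$. $X{\downarrow}$ = set of divisors of elements of $X$. A presentation $P=(I,J,K)$ ($I,J$ finite subsets of $\mathbb N\setminus\{0\}$, $K\subseteq\{\omega\}$) is reduced if $I\cup J\cup K\ne\emptyset$, $J\ne\emptyset\Rightarrow K=\emptyset$, no $m\in I$ divides any element of $(I\setminus\{m\})\cup J$, and no $n\in J$ divides any element of $J\setminus\{n\}$. Generators: for $k\ge2$, $0\le h<k$, $\gcd(k,h)=1$, $g_{k,h}$ is the unique element $a\in\mathbf{\L}_{k,h}$ with $a\le\neg a$ generating $\mathbf{\L}_{k,h}$; $g_{1,0}=(0,1)\in\mathbf{\L}_{1,0}$. Construction: $\Delta_I=\{(k,h,2):0\le h<k\in I{\downarrow},\gcd(k,h)=1\}$,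 $\Delta_J=\{(k,h,i):i\in\{0,1\},0\le h<k\in J{\downarrow},\gcd(k,h)=1\}$, $\Delta_K=\{(0,0,3)\}$ if $K=\{\omega\}$, else $\emptyset$; $\Delta=\Delta_I\cup\Delta_J\cup\Delta_K$; $\mathbf A^0_{k,h}=\mathbf A^1_{k,h}=\mathbf{\L}_{k,h}$, $\mathbf A^2_{k,h}=\mathbf{\L}_k$, $\mathbf A^3_{k,h}=\mathbf C_\omega$; $\mathbf A_\Delta=\prod_{(k,h,i)\in\Delta}\mathbf A^i_{k,h}$; $\bar g(k,h,0)=g_{k,h}$, $\bar g(k,h,1)=\neg g_{k,h}$, $\bar g(k,h,2)=h\in\mathbf{\L}_k$, $\bar g(0,0,3)=c$; $\mathbf B_\Delta$ is the subalgebra of $\mathbf A_\Delta$ generated by $\bar g$. *)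

theory Defs
  imports Main
begin

record 'a hoop_alg =
  hcarrier :: "'a set"
  hmult :: "'a \<Rightarrow> 'a \<Rightarrow> 'a"
  himp :: "'a \<Rightarrow> 'a \<Rightarrow> 'a"
  hone :: 'a

inductive_set hgen :: "'a hoop_alg \<Rightarrow> 'a set \<Rightarrow> 'a set" for A X where
  base: "x \<in> X \<Longrightarrow> x \<in> hcarrier A \<Longrightarrow> x \<in> hgen A X"
| one: "hone A \<in> hgen A X"
| mult: "x \<in> hgen A X \<Longrightarrow> y \<in> hgen A X \<Longrightarrow> hmult A x y \<in> hgen A X"
| imp: "x \<in> hgen A X \<Longrightarrow> y \<in> hgen A X \<Longrightarrow> himp A x y \<in> hgen A X"

definition subalg_gen :: "'a hoop_alg \<Rightarrow> 'a set \<Rightarrow> 'a hoop_alg" where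
  "subalg_gen A X = A\<lparr>hcarrier := hgen A X\<rparr>"

definition hoop_embeddable :: "'a hoop_alg \<Rightarrow> 'b hoop_alg \<Rightarrow> bool" where
  "hoop_embeddable A B \<longleftrightarrow> (\<exists>f. inj_on f (hcarrier A) \<and> f ` hcarrier A \<subseteq> hcarrier B \<and>
     f (hone A) = hone B \<and>
     (\<forall>x\<in>hcarrier A. \<forall>y\<in>hcarrier A.
        f (hmult A x y) = hmult B (f x) (f y) \<and> f (himp A x y) = himp B (f x) (f y)))"

definition lex_le :: "int \<times> int \<Rightarrow> int \<times> int \<Rightarrow> bool" where
  "lex_le x y \<longleftrightarrow> fst x < fst y \<or> (fst x = fst y \<and> snd x \<le> snd y)"

definition lex_max :: "int \<times> int \<Rightarrow> int \<times> int \<Rightarrow> int \<times> int" where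
  "lex_max x y = (if lex_le x y then y else x)"

definition lex_min :: "int \<times> int \<Rightarrow> int \<times> int \<Rightarrow> int \<times> int" where
  "lex_min x y = (if lex_le x y then x else y)"

definition padd :: "int \<times> int \<Rightarrow> int \<times> int \<Rightarrow> int \<times> int" where
  "padd x y = (fst x + fst y, snd x + snd y)"

definition psub :: "int \<times> int \<Rightarrow> int \<times> int \<Rightarrow> int \<times> int" where
  "psub x y = (fst x - fst y, snd x - snd y)"

definition Gamma_lex :: "int \<times> int \<Rightarrow> (int \<times> int) hoop_alg" where
  "Gamma_lex u = \<lparr> hcarrier = {x. lex_le (0,0) x \<and> lex_le x u},
     hmult = (\<lambda>a b. lex_max (psub (padd a b) u) (0,0)),
     himp = (\<lambda>a b. lex_min (padd (psub u a) b) u),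
     hone = u \<rparr>"

definition Luk2 :: "nat \<Rightarrow> nat \<Rightarrow> (int \<times> int) hoop_alg" where
  "Luk2 k h = Gamma_lex (int k, int h)"

definition Luk :: "nat \<Rightarrow> (int \<times> int) hoop_alg" where
  "Luk n = \<lparr> hcarrier = {(m,0) | m. 0 \<le> m \<and> m \<le> int n},
     hmult = (\<lambda>a b. (max (fst a + fst b - int n) 0, 0)),
     himp = (\<lambda>a b. (min (int n - fst a + fst b) (int n), 0)),
     hone = (int n, 0) \<rparr>"

text \<open>\<open>C\<^sub>\<omega>\<close>: negative cone of \<open>\<int>\<close>, element z \<le> 0 represented as (z,0);
  generator c = -1, so \<open>c^l\<close> is (-l,0).\<close>
definition Comega :: "(int \<times> int) hoop_alg" where
  "Comega = \<lparr> hcarrier = {(z,0) | z. z \<le> 0},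
     hmult = (\<lambda>a b. (fst a + fst b, 0)),
     himp = (\<lambda>a b. (min (fst b - fst a) 0, 0)),
     hone = (0, 0) \<rparr>"

definition neg_lex :: "nat \<Rightarrow> nat \<Rightarrow> int \<times> int \<Rightarrow> int \<times> int" where
  "neg_lex k h a = himp (Luk2 k h) a (0,0)"

definition gen_el :: "nat \<Rightarrow> nat \<Rightarrow> int \<times> int" where
  "gen_el k h = (if k = 1 \<and> h = 0 then (0,1)
     else (THE a. a \<in> hcarrier (Luk2 k h) \<and> lex_le a (neg_lex k h a) \<and>
                  hgen (Luk2 k h) {a} = hcarrier (Luk2 k h)))"

datatype omega = Omega

definition reduced :: "nat set \<Rightarrow> nat set \<Rightarrow> omega set \<Rightarrow> bool" where
  "reduced I J K \<longleftrightarrow> finite I \<and> finite J \<and> 0 \<notin> I \<and> 0 \<notin> J \<and>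
     (I \<noteq> {} \<or> J \<noteq> {} \<or> K \<noteq> {}) \<and>
     (J \<noteq> {} \<longrightarrow> K = {}) \<and>
     (\<forall>m\<in>I. \<forall>x\<in>(I - {m}) \<union> J. \<not> m dvd x) \<and>
     (\<forall>n\<in>J. \<forall>x\<in>J - {n}. \<not> n dvd x)"

definition divdown :: "nat set \<Rightarrow> nat set" where
  "divdown X = {d. \<exists>m\<in>X. d dvd m}"

definition Delta :: "nat set \<Rightarrow> nat set \<Rightarrow> omega set \<Rightarrow> (nat \<times> nat \<times> nat) set" where
  "Delta I J K =
     {(k,h,2) | k h. k \<in> divdown I \<and> h < k \<and> coprime k h} \<union>
     {(k,h,i) | k h i. i \<in> {0,1} \<and> k \<in> divdown J \<and> h < k \<and> coprime k h} \<union>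
     (if Omega \<in> K then {(0,0,3)} else {})"

definition comp_alg :: "nat \<times> nat \<times> nat \<Rightarrow> (int \<times> int) hoop_alg" where
  "comp_alg d = (case d of (k,h,i) \<Rightarrow>
     if i \<le> 1 then Luk2 k h else if i = 2 then Luk k else Comega)"

text \<open>Product over \<open>\<Delta>\<close>: functions supported on \<open>\<Delta>\<close> (value (0,0) outside).\<close>
definition prod_alg :: "(nat \<times> nat \<times> nat) set \<Rightarrow> (nat \<times> nat \<times> nat \<Rightarrow> int \<times> int) hoop_alg" where
  "prod_alg D = \<lparr> hcarrier = {f. (\<forall>d\<in>D. f d \<in> hcarrier (comp_alg d)) \<and> (\<forall>d. d \<notin> D \<longrightarrow> f d = (0,0))},
     hmult = (\<lambda>f g d. if d \<in> D then hmult (comp_alg d) (f d) (g d) else (0,0)),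
     himp = (\<lambda>f g d. if d \<in> D then himp (comp_alg d) (f d) (g d) else (0,0)),
     hone = (\<lambda>d. if d \<in> D then hone (comp_alg d) else (0,0)) \<rparr>"

definition gbar :: "(nat \<times> nat \<times> nat) set \<Rightarrow> nat \<times> nat \<times> nat \<Rightarrow> int \<times> int" where
  "gbar D d = (if d \<notin> D then (0,0) else (case d of (k,h,i) \<Rightarrow>
     if i = 0 then gen_el k h
     else if i = 1 then neg_lex k h (gen_el k h)
     else if i = 2 then (int h, 0)
     else (-1, 0)))"

definition B_Delta :: "nat set \<Rightarrow> nat set \<Rightarrow> omega set \<Rightarrow> (nat \<times> nat \<times> nat \<Rightarrow> int \<times> int) hoop_alg" where
  "B_Delta I J K = subalg_gen (prod_alg (Delta I J K)) {gbar (Delta I J K)}"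

end

theory Submission
  imports Defs "HOL-Library.Product_Lexorder" "HOL-Library.Product_Plus"
begin

text \<open>
  Sending \<open>m\<close> to the tuple that is \<open>m\<close> at the coordinates \<open>(a, h, 2)\<close> of \<open>\<Delta>\<close> and the
  top element elsewhere embeds \<open>\<L>\<^sub>a\<close> into \<open>A\<^sub>\<Delta>\<close>; its image lies in \<open>B\<^sub>\<Delta>\<close> as soon as the
  image of \<open>a - 1\<close> does, because the other elements are its powers. That element is
  the value at \<open>g\<close> of an explicit term. Every coordinate is a subalgebra of some
  \<open>\<Gamma>(\<int> \<times>\<^sub>l \<int>, u)\<close>, where the clamped linear functions \<open>(M y - c u)\<close> are term definable.
  For \<open>h\<close> coprime to \<open>a\<close>, pick \<open>\<alpha> h = a \<beta> + 1\<close> and \<open>s\<close> large; then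
  \<open>(\<alpha> y - \<beta> u) \<rightarrow> (s (a y - h u))\<close> is the top element unless the first coordinates satisfy
  \<open>y\<^sub>1 / u\<^sub>1 = h / a\<close>, and at \<open>y = h\<close> in \<open>\<L>\<^sub>a\<close> it equals \<open>a - 1\<close>. Reducedness of the
  presentation ensures that this slope occurs only at the coordinates \<open>(a, h, 2)\<close>. That
  the \<open>g\<^sub>k\<^sub>,\<^sub>h\<close> are well defined follows since a generator of \<open>\<L>\<^sub>k\<^sub>,\<^sub>h\<close> forms a
  unimodular pair with \<open>(k, h)\<close>.
\<close>

section \<open>Terms in one variable and hoop homomorphisms\<close>

datatype hterm = Var | Mul hterm hterm | Imp hterm hterm

primrec heval :: "'a hoop_alg \<Rightarrow> 'a \<Rightarrow> hterm \<Rightarrow> 'a" where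
  "heval A x Var = x"
| "heval A x (Mul s t) = hmult A (heval A x s) (heval A x t)"
| "heval A x (Imp s t) = himp A (heval A x s) (heval A x t)"

definition Oplus :: "hterm \<Rightarrow> hterm \<Rightarrow> hterm" where
  "Oplus s t = Imp (Imp s (Mul s t)) t"

definition Top :: hterm where
  "Top = Imp Var Var"

lemma heval_in_hgen: "x \<in> hgen A X \<Longrightarrow> heval A x t \<in> hgen A X"
  by (induction t) (auto intro: hgen.intros)

definition hoop_hom :: "'a hoop_alg \<Rightarrow> 'b hoop_alg \<Rightarrow> ('a \<Rightarrow> 'b) \<Rightarrow> bool" where
  "hoop_hom A B f \<longleftrightarrow> f ` hcarrier A \<subseteq> hcarrier B \<and> f (hone A) = hone B \<and>
     (\<forall>x\<in>hcarrier A. \<forall>y\<in>hcarrier A.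
        f (hmult A x y) = hmult B (f x) (f y) \<and> f (himp A x y) = himp B (f x) (f y))"

lemma hoop_embeddable_iff: "hoop_embeddable A B \<longleftrightarrow> (\<exists>f. inj_on f (hcarrier A) \<and> hoop_hom A B f)"
  by (simp add: hoop_embeddable_def hoop_hom_def)

lemma heval_hoop_hom:
  assumes closed: "\<And>x y. x \<in> hcarrier A \<Longrightarrow> y \<in> hcarrier A \<Longrightarrow>
      hmult A x y \<in> hcarrier A \<and> himp A x y \<in> hcarrier A"
    and f: "hoop_hom A B f" and x: "x \<in> hcarrier A"
  shows "heval A x t \<in> hcarrier A \<and> f (heval A x t) = heval B (f x) t"
  by (induction t) (use closed f x in \<open>auto simp: hoop_hom_def\<close>)

section \<open>The hoops \<open>\<Gamma>(G, u)\<close> over a linearly ordered abelian group\<close>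

definition Gamma :: "'g::linordered_ab_group_add \<Rightarrow> 'g hoop_alg" where
  "Gamma u = \<lparr> hcarrier = {0..u}, hmult = (\<lambda>a b. max (a + b - u) 0),
     himp = (\<lambda>a b. min (u - a + b) u), hone = u \<rparr>"

lemma Gamma_carrier [simp]: "hcarrier (Gamma u) = {0..u}"
  and Gamma_one [simp]: "hone (Gamma u) = u"
  and Gamma_mult: "hmult (Gamma u) a b = max (a + b - u) 0"
  and Gamma_imp: "himp (Gamma u) a b = min (u - a + b) u"
  by (simp_all add: Gamma_def)

definition clamp :: "'g::linordered_ab_group_add \<Rightarrow> 'g \<Rightarrow> 'g" where
  "clamp u z = min (max z 0) u"

lemmas ordered_group_bounds =
  add_mono add_nonneg_nonneg add_increasing add_increasing2 add_nonpos_nonpos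

lemma Gamma_closed:
  fixes a b u :: "'g::linordered_ab_group_add"
  assumes "a \<in> {0..u}" "b \<in> {0..u}"
  shows "hmult (Gamma u) a b \<in> {0..u}" "himp (Gamma u) a b \<in> {0..u}"
  using assms by (auto simp: Gamma_mult Gamma_imp max_def min_def algebra_simps
      intro: ordered_group_bounds order.trans)

lemma heval_Gamma_in: "y \<in> {0..u} \<Longrightarrow> heval (Gamma u) y t \<in> {0..u}"
  by (induction t) (use Gamma_closed in \<open>simp_all del: atLeastAtMost_iff\<close>)

lemma heval_Gamma_Top: "0 \<le> y \<Longrightarrow> heval (Gamma u) y Top = u"
  by (simp add: Top_def Gamma_imp)

lemma Gamma_oplus:
  fixes a b u :: "'g::linordered_ab_group_add"
  assumes "0 \<le> a" "a \<le> u" "0 \<le> b" "b \<le> u"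
  shows "himp (Gamma u) (himp (Gamma u) a (hmult (Gamma u) a b)) b = min (a + b) u"
  using assms by (auto simp: Gamma_mult Gamma_imp max_def min_def algebra_simps)

lemma heval_Gamma_Oplus:
  assumes "y \<in> {0..u}"
  shows "heval (Gamma u) y (Oplus s t) = min (heval (Gamma u) y s + heval (Gamma u) y t) u"
proof -
  have "heval (Gamma u) y s \<in> {0..u}" "heval (Gamma u) y t \<in> {0..u}"
    using heval_Gamma_in[OF assms] by blast+
  then show ?thesis by (simp add: Oplus_def Gamma_oplus)
qed

lemma Gamma_mult_top:
  fixes w u :: "'g::linordered_ab_group_add"
  assumes "0 \<le> w" shows "hmult (Gamma u) u w = w" "hmult (Gamma u) w u = w"
  using assms by (simp_all add: Gamma_mult max_def)

lemma Gamma_imp_top: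
  fixes x u :: "'g::linordered_ab_group_add"
  assumes "x \<in> {0..u}" shows "himp (Gamma u) 0 x = u" "himp (Gamma u) x u = u"
  using assms by (auto simp: Gamma_imp min_def intro: ordered_group_bounds)

lemma clamp_in: "0 \<le> u \<Longrightarrow> clamp u z \<in> {0..u}"
  by (auto simp: clamp_def)

lemma clamp_eq_0: "z \<le> 0 \<Longrightarrow> 0 \<le> u \<Longrightarrow> clamp u z = 0"
  by (simp add: clamp_def)

lemma clamp_eq_top: "u \<le> z \<Longrightarrow> 0 \<le> u \<Longrightarrow> clamp u z = u"
  by (auto simp: clamp_def max_def min_def)

lemma clamp_add:
  fixes t y u :: "'g::linordered_ab_group_add"
  assumes "0 \<le> y" "y \<le> u"
  shows "clamp u (t + y) = hmult (Gamma u) (min (clamp u t + y) u) (clamp u (t + u))"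
  using assms by (auto simp: Gamma_mult clamp_def max_def min_def algebra_simps
      intro: ordered_group_bounds order.trans antisym)

lemma Gamma_mult_clamp:
  fixes w y u :: "'g::linordered_ab_group_add"
  assumes "w \<le> u" "0 \<le> y" "y \<le> u"
  shows "hmult (Gamma u) y (clamp u w) = clamp u (y + w - u)"
  using assms by (auto simp: Gamma_mult clamp_def max_def min_def algebra_simps
      intro: ordered_group_bounds order.trans antisym)

lemma Gamma_oplus_clamp:
  fixes w y u :: "'g::linordered_ab_group_add"
  assumes "0 \<le> w" "0 \<le> y" "y \<le> u"
  shows "min (clamp u w + y) u = clamp u (w + y)"
  using assms by (auto simp: Gamma_mult clamp_def max_def min_def algebra_simps
      intro: ordered_group_bounds order.trans antisym)

definition lin :: "nat \<Rightarrow> nat \<Rightarrow> 'g \<Rightarrow> 'g \<Rightarrow> 'g::ab_group_add" where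
  "lin M c y u = (\<Sum>i<M. y) - (\<Sum>i<c. u)"

lemma lin_Suc_left: "lin (Suc M) c y u = lin M c y u + y"
  and lin_Suc_right: "lin M (Suc c) y u = lin M c y u - u"
  by (simp_all add: lin_def algebra_simps)

lemma lin_0_nonneg: "0 \<le> y \<Longrightarrow> 0 \<le> lin M 0 (y::'g::ordered_ab_group_add) u"
  by (simp add: lin_def sum_nonneg)

lemma lin_diag_nonpos: "y \<le> u \<Longrightarrow> lin M M (y::'g::ordered_ab_group_add) u \<le> 0"
  by (simp add: lin_def sum_mono)

fun lin_term :: "nat \<Rightarrow> nat \<Rightarrow> hterm" where
  "lin_term (Suc (Suc M)) 0 = Oplus (lin_term (Suc M) 0) Var"
| "lin_term (Suc (Suc M)) (Suc c) =
     (if c = M then Mul Var (lin_term (Suc M) c)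
      else Mul (Oplus (lin_term (Suc M) (Suc c)) Var) (lin_term (Suc M) c))"
| "lin_term _ _ = Var"

lemma heval_lin_term:
  assumes y: "y \<in> {0..u}"
  shows "c < M \<Longrightarrow> heval (Gamma u) y (lin_term M c) = clamp u (lin M c y u)"
proof (induction M c rule: lin_term.induct)
  case (1 M)
  have "heval (Gamma u) y (lin_term (Suc (Suc M)) 0) = min (clamp u (lin (Suc M) 0 y u) + y) u"
    using 1 y by (simp add: heval_Gamma_Oplus)
  also have "\<dots> = clamp u (lin (Suc (Suc M)) 0 y u)"
    using y lin_0_nonneg[of y] by (simp add: Gamma_oplus_clamp lin_Suc_left[of "Suc M"])
  finally show ?case .
next
  case (2 M c)
  show ?case
  proof (cases "c = M")
    case True
    have "lin (Suc M) M y u \<le> u"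
      using lin_diag_nonpos[of y u "Suc M"] y by (simp add: lin_Suc_right algebra_simps)
    then show ?thesis
      using True 2 y by (simp add: Gamma_mult_clamp lin_Suc_left lin_Suc_right algebra_simps)
  next
    case False
    then have "heval (Gamma u) y (lin_term (Suc (Suc M)) (Suc c)) =
      hmult (Gamma u) (min (clamp u (lin (Suc M) (Suc c) y u) + y) u) (clamp u (lin (Suc M) c y u))"
      using 2 y by (simp add: heval_Gamma_Oplus)
    also have "\<dots> = clamp u (lin (Suc M) (Suc c) y u + y)"
      using clamp_add[of y u "lin (Suc M) (Suc c) y u"] y by (simp add: lin_Suc_right)
    finally show ?thesis by (simp add: lin_Suc_left[of "Suc M"])
  qed
qed (use y in \<open>auto simp: lin_def clamp_def\<close>)

lemma heval_Mul_list_top: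
  assumes "y \<in> {0..u}" "\<And>t. t \<in> set ts \<Longrightarrow> heval (Gamma u) y t = u"
  shows "heval (Gamma u) y (foldr Mul ts Top) = u"
  using assms(2)
proof (induction ts)
  case Nil then show ?case using assms(1) heval_Gamma_Top[of y u] by simp
next
  case (Cons t ts)
  have "0 \<le> u" using assms(1) by auto
  then show ?case using Cons Gamma_mult_top(1)[of u u] by simp
qed

lemma heval_Mul_list_single:
  assumes "distinct xs" "x0 \<in> set xs" "y \<in> {0..u}" "0 \<le> w"
    and "\<And>x. x \<in> set xs \<Longrightarrow> heval (Gamma u) y (f x) = (if x = x0 then w else u)"
  shows "heval (Gamma u) y (foldr Mul (map f xs) Top) = w"
  using assms(1,2,5)
proof (induction xs)
  case Nil then show ?case by simp
next
  case (Cons x xs)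
  show ?case
  proof (cases "x = x0")
    case True
    then have "heval (Gamma u) y (foldr Mul (map f xs) Top) = u"
      using Cons.prems assms(3) by (intro heval_Mul_list_top) auto
    then show ?thesis using True Cons.prems assms(4) by (simp add: Gamma_mult_top)
  next
    case False
    then show ?thesis using Cons assms(4) by (simp add: Gamma_mult_top)
  qed
qed

lemma hgen_Gamma_subset:
  assumes "0 \<le> u" shows "hgen (Gamma u) X \<subseteq> {0..u}"
proof
  fix x assume "x \<in> hgen (Gamma u) X"
  then show "x \<in> {0..u}"
  proof induction
    case one then show ?case using assms by simp
  qed (simp_all add: Gamma_closed del: atLeastAtMost_iff)
qed

lemma hgen_Gamma_subgroup:
  assumes "X \<subseteq> H" "u \<in> H" "0 \<in> H" and closed: "\<And>x y. x \<in> H \<Longrightarrow> y \<in> H \<Longrightarrow> x + y \<in> H \<and> x - y \<in> H"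
  shows "hgen (Gamma u) X \<subseteq> H"
proof
  fix x assume "x \<in> hgen (Gamma u) X"
  then show "x \<in> H"
  proof induction
    case (mult x y) then show ?case using closed assms(2,3) by (simp add: Gamma_mult max_def)
  next
    case (imp x y) then show ?case using closed assms(2) by (simp add: Gamma_imp min_def)
  qed (use assms in auto)
qed

lemma hgen_Gamma_add:
  assumes u: "0 \<le> u" and v: "v \<in> hgen (Gamma u) X" and w: "w \<in> hgen (Gamma u) X"
    and le: "v + w \<le> u"
  shows "v + w \<in> hgen (Gamma u) X"
proof -
  have "himp (Gamma u) (himp (Gamma u) v (hmult (Gamma u) v w)) w \<in> hgen (Gamma u) X"
    using v w by (intro hgen.imp hgen.mult)
  moreover have "v \<in> {0..u}" "w \<in> {0..u}" using hgen_Gamma_subset[OF u] v w by blast+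
  ultimately show ?thesis using le by (simp add: Gamma_oplus)
qed

lemma hgen_Gamma_diff:
  assumes u: "0 \<le> u" and z: "0 \<in> hgen (Gamma u) X"
    and v: "v \<in> hgen (Gamma u) X" and w: "w \<in> hgen (Gamma u) X" and le: "v \<le> w"
  shows "w - v \<in> hgen (Gamma u) X"
proof -
  have "himp (Gamma u) (himp (Gamma u) w v) 0 \<in> hgen (Gamma u) X"
    using v w z by (intro hgen.imp)
  moreover have "v \<in> {0..u}" "w \<in> {0..u}" using hgen_Gamma_subset[OF u] v w by blast+
  moreover have "w \<le> u + v" using calculation(2,3) by (simp add: add_increasing2)
  ultimately show ?thesis using le by (simp add: Gamma_imp min_def algebra_simps)
qed

section \<open>The lexicographic group \<open>\<int> \<times>\<^sub>l \<int>\<close>\<close>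

instance prod :: (linordered_ab_group_add, linordered_ab_group_add) linordered_ab_group_add
  by standard (auto simp: less_eq_prod_def)

lemma lex_le_iff_le [simp]: "lex_le x y \<longleftrightarrow> x \<le> y"
  by (auto simp: lex_le_def less_eq_prod_def)

lemma Gamma_lex_eq_Gamma: "Gamma_lex u = Gamma u"
proof -
  have ops: "lex_max = max" "lex_min = min" "padd = (+)" "psub = (-)"
    unfolding fun_eq_iff lex_max_def lex_min_def max_def min_def padd_def psub_def
      plus_prod_def minus_prod_def by simp_all
  have "{x. lex_le (0,0) x \<and> lex_le x u} = {0..u}" by (auto simp: zero_prod_def)
  then show ?thesis unfolding Gamma_lex_def Gamma_def ops zero_prod_def by simp
qed

lemma Luk2_eq_Gamma: "Luk2 k h = Gamma (int k, int h)"
  by (simp add: Luk2_def Gamma_lex_eq_Gamma)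

lemma fst_lin: "fst (lin M c y u) = int M * fst y - int c * fst u"
  and snd_lin: "snd (lin M c y u) = int M * snd y - int c * snd u"
  for y u :: "int \<times> int"
  by (simp_all add: lin_def fst_sum snd_sum)

lemma lin_Pair: "lin M c (y1, y2) (u1, u2) = (int M * y1 - int c * u1, int M * y2 - int c * u2)"
  for y1 y2 u1 u2 :: int
  by (simp add: prod_eq_iff fst_lin snd_lin)

section \<open>Generators of \<open>\<L>\<^sub>k\<^sub>,\<^sub>h\<close>\<close>

lemma hgen_Gamma_lattice:
  fixes a u :: "int \<times> int"
  assumes "x \<in> hgen (Gamma u) {a}"
  shows "\<exists>i j. x = (i * fst a + j * fst u, i * snd a + j * snd u)"
proof -
  let ?H = "{(i * fst a + j * fst u, i * snd a + j * snd u) | i j. True}"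
  have "hgen (Gamma u) {a} \<subseteq> ?H"
  proof (rule hgen_Gamma_subgroup)
    have "a = (1 * fst a + 0 * fst u, 1 * snd a + 0 * snd u)"
      and "u = (0 * fst a + 1 * fst u, 0 * snd a + 1 * snd u)"
      and "0 = (0 * fst a + 0 * fst u, 0 * snd a + 0 * snd u)" by (simp_all add: zero_prod_def)
    then show "{a} \<subseteq> ?H" "u \<in> ?H" "0 \<in> ?H" by blast+
  next
    fix x y assume "x \<in> ?H" "y \<in> ?H"
    then obtain i j i' j' where "x = (i * fst a + j * fst u, i * snd a + j * snd u)"
      "y = (i' * fst a + j' * fst u, i' * snd a + j' * snd u)" by blast
    then have "x + y = ((i + i') * fst a + (j + j') * fst u, (i + i') * snd a + (j + j') * snd u)"
      "x - y = ((i - i') * fst a + (j - j') * fst u, (i - i') * snd a + (j - j') * snd u)"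
      by (simp_all add: algebra_simps)
    then show "x + y \<in> ?H \<and> x - y \<in> ?H" by blast
  qed
  then show ?thesis using assms by blast
qed

lemma unimodular_if_generates:
  fixes a u :: "int \<times> int"
  assumes "(1,0) \<in> hgen (Gamma u) {a}" "(0,1) \<in> hgen (Gamma u) {a}"
  shows "\<bar>fst a * snd u - snd a * fst u\<bar> = 1"
proof -
  obtain i j i' j' where "(1,0) = (i * fst a + j * fst u, i * snd a + j * snd u)"
    "(0,1) = (i' * fst a + j' * fst u, i' * snd a + j' * snd u)"
    using hgen_Gamma_lattice[OF assms(1)] hgen_Gamma_lattice[OF assms(2)] by blast
  then have "(fst a * snd u - snd a * fst u) * (i * j' - i' * j) = 1"
    by simp algebra
  then show ?thesis by (metis abs_zmult_eq_1 abs_one)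
qed

lemma unimodular_normal_fst:
  fixes k h :: int and x :: "int \<times> int"
  assumes "2 \<le> k" "\<bar>fst x * h - snd x * k\<bar> = 1" "0 \<le> x" "x + x \<le> (k, h)"
  shows "0 < fst x \<and> 2 * fst x \<le> k"
proof -
  have "fst x \<noteq> 0"
  proof
    assume "fst x = 0"
    then have "\<bar>k * snd x\<bar> = 1" using assms(2) by (simp add: mult.commute)
    then show False using abs_zmult_eq_1 assms(1) by fastforce
  qed
  then show ?thesis using assms(3,4) by (cases x) (auto simp: zero_prod_def)
qed

lemma unimodular_normal_unique:
  fixes k h :: int and a b :: "int \<times> int"
  assumes k: "2 \<le> k" "0 < h" "h < k" "coprime k h"
    and a: "\<bar>fst a * h - snd a * k\<bar> = 1" "0 \<le> a" "a + a \<le> (k, h)"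
    and b: "\<bar>fst b * h - snd b * k\<bar> = 1" "0 \<le> b" "b + b \<le> (k, h)"
  shows "a = b"
proof -
  obtain p q p' q' where ab: "a = (p, q)" "b = (p', q')" by fastforce
  have p: "0 < p" "2 * p \<le> k" "0 < p'" "2 * p' \<le> k"
    using unimodular_normal_fst[OF k(1) a] unimodular_normal_fst[OF k(1) b] ab by auto
  have e: "p * h - q * k \<in> {1, -1}" "p' * h - q' * k \<in> {1, -1}"
    using a(1) b(1) ab by (auto simp: abs_if split: if_splits)
  show ?thesis
  proof (cases "p * h - q * k = p' * h - q' * k")
    case True
    then have "(p - p') * h = k * (q - q')" by (simp add: algebra_simps)
    then have "k dvd (p - p') * h" by simp
    then have "k dvd p - p'" using coprime_dvd_mult_left_iff[OF k(4)] by blast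
    moreover have "\<bar>p - p'\<bar> < k" using p by auto
    ultimately have "p = p'" using dvd_imp_le_int[of "p - p'" k] by fastforce
    then have "q * k = q' * k" using True by simp
    then show ?thesis using ab \<open>p = p'\<close> k(1) by simp
  next
    case False
    then have "(p + p') * h = (q + q') * k" using e by (auto simp: algebra_simps)
    then have "k dvd (p + p') * h" by simp
    then have "k dvd p + p'" using coprime_dvd_mult_left_iff[OF k(4)] by blast
    then have "k \<le> p + p'" using p by (intro zdvd_imp_le) auto
    then have kp: "k = 2 * p" "k = 2 * p'" using p by auto
    then have "\<bar>p * (h - 2 * q)\<bar> = 1" using a(1) ab by (simp add: algebra_simps)
    then have "p = 1" using abs_zmult_eq_1 p(1) by fastforce
    then have "k = 2" "h = 1" "p' = 1" using kp k by auto
    then have "q = 0" "q' = 0"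
      using a(1,3) b(1,3) ab \<open>p = 1\<close> by (auto simp: abs_if split: if_splits)
    then show ?thesis using ab \<open>p = 1\<close> \<open>p' = 1\<close> by simp
  qed
qed

lemma unimodular_normal_exists:
  fixes k h :: int
  assumes k: "2 \<le> k" "0 < h" "h < k" "coprime k h"
  shows "\<exists>a. \<bar>fst a * h - snd a * k\<bar> = 1 \<and> 0 < fst a \<and> a + a \<le> (k, h)"
proof -
  obtain s t where st: "s * h + t * k = 1"
    using bezout_int[of h k] k(4) by (auto simp: coprime_iff_gcd_eq_1 gcd.commute)
  define m r where "m = s div k" and "r = s mod k"
  have r: "0 \<le> r" "r < k" using k(1) by (simp_all add: r_def)
  have "s = k * m + r" by (simp add: m_def r_def)
  define q where "q = - t - m * h"
  have e: "r * h - q * k = 1"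
    using st \<open>s = k * m + r\<close> unfolding q_def by (simp add: algebra_simps)
  have "r \<noteq> 0"
  proof
    assume "r = 0"
    then have "\<bar>k * q\<bar> = 1" using e by (simp add: mult.commute)
    then show False using abs_zmult_eq_1 k(1) by fastforce
  qed
  show ?thesis
  proof (cases "2 * r \<le> k")
    case True
    have "2 * r < k \<or> 2 * r = k \<and> 2 * q \<le> h"
    proof (cases "2 * r = k")
      case True
      then have "r * (h - 2 * q) = 1" using e by (simp add: algebra_simps)
      then have "0 < r * (h - 2 * q)" by simp
      then have "0 < h - 2 * q" using r(1) by (auto simp: zero_less_mult_iff)
      then show ?thesis using True by simp
    qed (use True in simp)
    then show ?thesis using e r \<open>r \<noteq> 0\<close> by (intro exI[of _ "(r, q)"]) auto
  next
    case False
    have "(k - r) * h - (h - q) * k = -1" using e by (simp add: algebra_simps)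
    then show ?thesis using False r by (intro exI[of _ "(k - r, h - q)"]) auto
  qed
qed

lemma zero_in_hgen_Gamma:
  fixes a u :: "int \<times> int"
  assumes a: "a \<in> {0..u}" "fst a < fst u"
  shows "0 \<in> hgen (Gamma u) {a}"
proof -
  define K where "K = nat (fst u)"
  have K: "int K = fst u" "0 \<le> fst a" using a by (auto simp: K_def zero_prod_def less_eq_prod_def)
  have "heval (Gamma u) a (lin_term (Suc K) K) \<in> hgen (Gamma u) {a}"
    using a(1) by (intro heval_in_hgen hgen.base) auto
  moreover have "heval (Gamma u) a (lin_term (Suc K) K) = clamp u (lin (Suc K) K a u)"
    using a(1) by (intro heval_lin_term) auto
  moreover have "lin (Suc K) K a u \<le> 0"
  proof -
    have "(int K + 1) * fst a \<le> (int K + 1) * (int K - 1)"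
      using a(2) K by (intro mult_left_mono) auto
    then have "fst (lin (Suc K) K a u) < 0" using K by (simp add: fst_lin algebra_simps)
    then show ?thesis by (simp add: less_eq_prod_def)
  qed
  moreover have "0 \<le> u" using a(1) by auto
  ultimately show ?thesis by (simp add: clamp_def)
qed

lemma unimodular_axis:
  fixes v w :: "int \<times> int"
  assumes "0 \<le> v" "0 \<le> w" "\<bar>fst v * snd w - snd v * fst w\<bar> = 1" "fst v = 0"
  shows "v = (0, 1) \<and> fst w = 1"
proof -
  have "\<bar>snd v * fst w\<bar> = 1" using assms(3,4) by simp
  moreover have "0 \<le> snd v" "0 \<le> fst w"
    using assms(1,2,4) by (cases v, cases w, auto simp: zero_prod_def)+
  ultimately have "snd v = 1" "fst w = 1"
    using abs_zmult_eq_1[of "snd v" "fst w"] abs_zmult_eq_1[of "fst w" "snd v"]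
    by (auto simp: mult.commute)
  then show ?thesis using assms(4) by (simp add: prod_eq_iff)
qed

lemma unimodular_pair_in_hgen:
  fixes u :: "int \<times> int"
  assumes u: "0 \<le> u" and z: "0 \<in> hgen (Gamma u) X"
  shows "v \<in> hgen (Gamma u) X \<Longrightarrow> w \<in> hgen (Gamma u) X \<Longrightarrow>
    \<bar>fst v * snd w - snd v * fst w\<bar> = 1 \<Longrightarrow>
    (0, 1) \<in> hgen (Gamma u) X \<and> (\<exists>c. (1, c) \<in> hgen (Gamma u) X)"
proof (induction "nat (fst v + fst w)" arbitrary: v w rule: less_induct)
  case less
  let ?S = "hgen (Gamma u) X"
  have nonneg: "0 < fst x \<or> fst x = 0 \<and> 0 \<le> snd x" if "x \<in> ?S" for x
    using hgen_Gamma_subset[OF u, of X] that by (cases x) (auto simp: zero_prod_def)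
  note v = nonneg[OF less.prems(1)] and w = nonneg[OF less.prems(2)]
  have step: "(0, 1) \<in> ?S \<and> (\<exists>c. (1, c) \<in> ?S)"
    if xy: "x \<in> ?S" "y \<in> ?S" "x \<le> y" "\<bar>fst x * snd y - snd x * fst y\<bar> = 1" "0 < fst x"
      and sum: "fst x + fst y = fst v + fst w" for x y
  proof -
    have "0 \<le> fst y" using nonneg[OF xy(2)] by auto
    then have "nat (fst x + fst (y - x)) < nat (fst v + fst w)" using xy(5) sum by simp
    moreover have "fst x * snd (y - x) - snd x * fst (y - x) = fst x * snd y - snd x * fst y"
      by (simp add: algebra_simps)
    moreover have "y - x \<in> ?S" using hgen_Gamma_diff[OF u z xy(1-3)] .
    ultimately show ?thesis using less.hyps[of x "y - x"] xy(1,4) by simp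
  qed
  have det': "\<bar>fst w * snd v - snd w * fst v\<bar> = 1"
    using less.prems(3) by (simp add: abs_minus_commute mult.commute)
  have v0: "0 \<le> v" and w0: "0 \<le> w"
    using hgen_Gamma_subset[OF u, of X] less.prems(1,2) by auto
  consider "fst v = 0" | "fst w = 0" | "0 < fst v" "0 < fst w" using v w by linarith
  then show ?case
  proof cases
    case 1
    then show ?thesis using unimodular_axis[OF v0 w0 less.prems(3)] less.prems(1,2)
      by (metis prod.collapse)
  next
    case 2
    then show ?thesis using unimodular_axis[OF w0 v0 det'] less.prems(1,2) by (metis prod.collapse)
  next
    case 3
    consider "v \<le> w" | "w \<le> v" using linear by blast
    then show ?thesis
    proof cases
      case 1 then show ?thesis using step less.prems 3 by blast
    next
      case 2 then show ?thesis using step[of w v] det' less.prems 3 by (simp add: add.commute)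
    qed
  qed
qed

lemma hgen_Gamma_vertical:
  fixes u :: "int \<times> int"
  assumes u: "0 \<le> u"
    and S: "0 \<in> hgen (Gamma u) X" "(0, 1) \<in> hgen (Gamma u) X" "(m, c) \<in> hgen (Gamma u) X"
    and z: "(m, z) \<in> {0..u}"
  shows "(m, z) \<in> hgen (Gamma u) X"
proof (cases "c \<le> z")
  case True
  have up: "(m, c + int n) \<le> (m, z) \<longrightarrow> (m, c + int n) \<in> hgen (Gamma u) X" for n
  proof (induction n)
    case 0 then show ?case using S(3) by simp
  next
    case (Suc n)
    have "(m, c + int (Suc n)) \<in> hgen (Gamma u) X" if le: "(m, c + int (Suc n)) \<le> (m, z)"
    proof -
      have "(m, c + int n) + (0, 1) = (m, c + int (Suc n))" by simp
      moreover have "(m, c + int (Suc n)) \<le> u" using le z by (meson atLeastAtMost_iff order_trans)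
      moreover have "(m, c + int n) \<in> hgen (Gamma u) X" using le Suc by simp
      ultimately show ?thesis using hgen_Gamma_add[OF u _ S(2)] by metis
    qed
    then show ?case by blast
  qed
  have "c + int (nat (z - c)) = z" using True by simp
  then show ?thesis using up[of "nat (z - c)"] by simp
next
  case False
  have down: "z \<le> c - int n \<longrightarrow> (m, c - int n) \<in> hgen (Gamma u) X" for n
  proof (induction n)
    case 0 then show ?case using S(3) by simp
  next
    case (Suc n)
    have "(0, 1) \<le> (m, c - int n)" if "z \<le> c - int (Suc n)"
      using that z by (auto simp: zero_prod_def)
    then have "(m, c - int n) - (0, 1) \<in> hgen (Gamma u) X" if "z \<le> c - int (Suc n)"
      using that Suc by (intro hgen_Gamma_diff[OF u S(1,2)]) auto
    then show ?case by (simp add: algebra_simps)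
  qed
  have "c - int (nat (c - z)) = z" using False by simp
  then show ?thesis using down[of "nat (c - z)"] by simp
qed

lemma hgen_Gamma_fill:
  fixes u :: "int \<times> int"
  assumes u: "1 \<le> fst u" "0 \<le> snd u"
    and S: "0 \<in> hgen (Gamma u) X" "(0, 1) \<in> hgen (Gamma u) X" "(1, c) \<in> hgen (Gamma u) X"
  shows "hgen (Gamma u) X = {0..u}"
proof
  let ?S = "hgen (Gamma u) X"
  have u0: "0 \<le> u" using u by (cases u) (simp add: zero_prod_def)
  show "?S \<subseteq> {0..u}" using hgen_Gamma_subset[OF u0] .
  have row: "int m \<le> fst u \<longrightarrow> (int m, 0) \<in> ?S" for m
  proof (induction m)
    case 0 then show ?case using S(1) by (simp add: zero_prod_def)
  next
    case (Suc m)
    have "(1, 0) \<in> ?S" using u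
      by (intro hgen_Gamma_vertical[OF u0 S]) (cases u, simp add: zero_prod_def)
    moreover have "(int m, 0) + (1, 0) \<le> u" if "int (Suc m) \<le> fst u"
      using that u by (cases u) auto
    ultimately have "(int m, 0) + (1, 0) \<in> ?S" if "int (Suc m) \<le> fst u"
      using that Suc by (intro hgen_Gamma_add[OF u0]) auto
    then show ?case by (simp add: add.commute)
  qed
  show "{0..u} \<subseteq> ?S"
  proof
    fix x assume x: "x \<in> {0..u}"
    have "0 \<le> fst x" "fst x \<le> fst u" using x by (auto simp: zero_prod_def less_eq_prod_def)
    then have x1: "x = (int (nat (fst x)), snd x)" "int (nat (fst x)) \<le> fst u" by auto
    then have "(int (nat (fst x)), 0) \<in> ?S" using row by blast
    then show "x \<in> ?S" using hgen_Gamma_vertical[OF u0 S(1,2)] x x1 by metis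
  qed
qed

definition normal_generator :: "nat \<Rightarrow> nat \<Rightarrow> int \<times> int \<Rightarrow> bool" where
  "normal_generator k h a \<longleftrightarrow> a \<in> hcarrier (Luk2 k h) \<and> lex_le a (neg_lex k h a) \<and>
     hgen (Luk2 k h) {a} = hcarrier (Luk2 k h)"

lemma normal_generator_iff:
  "normal_generator k h a \<longleftrightarrow>
     a \<in> {0..(int k, int h)} \<and> a + a \<le> (int k, int h) \<and>
     hgen (Gamma (int k, int h)) {a} = {0..(int k, int h)}"
proof -
  have "neg_lex k h a = (int k, int h) - a" if "0 \<le> a"
    using that by (cases a) (auto simp: neg_lex_def Luk2_eq_Gamma Gamma_imp zero_prod_def min_def)
  then show ?thesis by (auto simp: normal_generator_def Luk2_eq_Gamma le_diff_eq)
qed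

lemma normal_generator_unique:
  assumes k: "2 \<le> k" "0 < h" "h < k" "coprime k h"
    and a: "normal_generator k h a" and b: "normal_generator k h b"
  shows "a = b"
proof -
  let ?u = "(int k, int h)"
  have unimodular: "\<bar>fst x * int h - snd x * int k\<bar> = 1" if "normal_generator k h x" for x
  proof -
    have "(1, 0) \<in> hgen (Gamma ?u) {x}" "(0, 1) \<in> hgen (Gamma ?u) {x}"
      using that k by (auto simp: normal_generator_iff zero_prod_def)
    then show ?thesis using unimodular_if_generates by fastforce
  qed
  have "coprime (int k) (int h)" using k(4) by simp
  then show ?thesis
    using unimodular_normal_unique[of "int k" "int h"] unimodular[OF a] unimodular[OF b] a b k
    by (auto simp: normal_generator_iff)
qed

lemma normal_generator_exists:
  assumes k: "2 \<le> k" "0 < h" "h < k" "coprime k h"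
  shows "\<exists>a. normal_generator k h a"
proof -
  let ?u = "(int k, int h)"
  obtain a where a: "\<bar>fst a * int h - snd a * int k\<bar> = 1" "0 < fst a" "a + a \<le> ?u"
    using unimodular_normal_exists[of "int k" "int h"] k by auto
  have a0: "0 \<le> a" using a(2) by (cases a) (simp add: zero_prod_def)
  then have au: "a \<in> {0..?u}" using a(3) order_trans[OF add_increasing[OF a0 order_refl]] by auto
  have u0: "0 \<le> ?u" using k by (simp add: zero_prod_def)
  have "fst a < int k" using a(2,3) by (cases a) auto
  then have z: "0 \<in> hgen (Gamma ?u) {a}" using zero_in_hgen_Gamma[OF au] by simp
  have "a \<in> hgen (Gamma ?u) {a}" "?u \<in> hgen (Gamma ?u) {a}"
    using au hgen.base[of a "{a}"] hgen.one[of "Gamma ?u" "{a}"] by auto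
  then obtain c where "(0, 1) \<in> hgen (Gamma ?u) {a}" "(1, c) \<in> hgen (Gamma ?u) {a}"
    using unimodular_pair_in_hgen[OF u0 z] a(1) by fastforce
  then have "hgen (Gamma ?u) {a} = {0..?u}"
    using hgen_Gamma_fill[of ?u, OF _ _ z] k by simp
  then have "normal_generator k h a" using au a(3) by (simp add: normal_generator_iff)
  then show ?thesis ..
qed

lemma gen_el_in_Luk2:
  assumes "1 \<le> k" "h < k" "coprime k h"
  shows "gen_el k h \<in> hcarrier (Luk2 k h)"
proof (cases "k = 1")
  case True
  then show ?thesis using assms by (simp add: gen_el_def Luk2_eq_Gamma zero_prod_def)
next
  case False
  have "h \<noteq> 0"
  proof
    assume "h = 0"
    then have "coprime k 0" using assms(3) by simp
    then show False using False by simp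
  qed
  then have k: "2 \<le> k" "0 < h" "h < k" "coprime k h" using assms False by auto
  have "\<exists>!a. normal_generator k h a"
    using normal_generator_exists[OF k] normal_generator_unique[OF k] by blast
  then have "normal_generator k h (THE a. normal_generator k h a)" by (rule theI')
  moreover have "gen_el k h = (THE a. normal_generator k h a)"
    using False by (simp add: gen_el_def normal_generator_def)
  ultimately show ?thesis by (simp add: normal_generator_def)
qed

section \<open>A term separating the slope \<open>h/a\<close>\<close>

text \<open>When
  \<open>\<alpha> h = a \<beta> + 1\<close>, the antecedent vanishes if \<open>a y\<^sub>1 < h u\<^sub>1\<close> and the consequent is \<open>u\<close> if
  \<open>a y\<^sub>1 > h u\<^sub>1\<close>, provided \<open>\<alpha>\<close> and \<open>s\<close> exceed \<open>u\<^sub>1\<close>.\<close>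

definition slope_test :: "nat \<Rightarrow> nat \<Rightarrow> nat \<Rightarrow> nat \<Rightarrow> nat \<Rightarrow> hterm" where
  "slope_test a h s \<alpha> \<beta> = Imp (lin_term \<alpha> \<beta>) (lin_term (a * s) (h * s))"

lemma heval_slope_test:
  assumes "y \<in> {0..u}" "\<alpha> * h = a * \<beta> + 1" "h < a" "0 < s"
  shows "heval (Gamma u) y (slope_test a h s \<alpha> \<beta>) =
    himp (Gamma u) (clamp u (lin \<alpha> \<beta> y u)) (clamp u (lin (a * s) (h * s) y u))"
proof -
  have "a * \<beta> < \<alpha> * h" using assms(2) by simp
  also have "\<dots> \<le> \<alpha> * a" using assms(3) by simp
  finally have "\<beta> < \<alpha>" by (simp add: mult.commute)
  moreover have "h * s < a * s" using assms(3,4) by simp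
  ultimately show ?thesis using assms(1) by (simp add: slope_test_def heval_lin_term)
qed

lemma slope_test_top:
  fixes u y :: "int \<times> int"
  assumes y: "y \<in> {0..u}" and ab: "\<alpha> * h = a * \<beta> + 1" "h < a"
    and u: "1 \<le> fst u" "fst u < int s" "fst u < int \<alpha>"
    and ne: "fst y * int a \<noteq> int h * fst u"
  shows "heval (Gamma u) y (slope_test a h s \<alpha> \<beta>) = u"
proof -
  have u0: "0 \<le> u" using y by auto
  have abi: "int \<alpha> * int h = int a * int \<beta> + 1" using ab(1)
    by (metis of_nat_mult of_nat_add of_nat_1)
  define D where "D = fst y * int a - int h * fst u"
  have eval: "heval (Gamma u) y (slope_test a h s \<alpha> \<beta>) =
    himp (Gamma u) (clamp u (lin \<alpha> \<beta> y u)) (clamp u (lin (a * s) (h * s) y u))"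
    using heval_slope_test[OF y ab] u by simp
  consider "D < 0" | "0 < D" using ne by (fastforce simp: D_def)
  then show ?thesis
  proof cases
    case 1
    have ab': "int a * int \<beta> = int \<alpha> * int h - 1" using abi by simp
    have "int a * fst (lin \<alpha> \<beta> y u) = int \<alpha> * (int a * fst y) - (int a * int \<beta>) * fst u"
      by (simp add: fst_lin algebra_simps)
    also have "\<dots> = int \<alpha> * D + fst u"
      unfolding ab' by (simp add: D_def algebra_simps)
    also have "\<dots> < 0" using 1 u(3) mult_left_mono[of D "-1" "int \<alpha>"] by simp
    finally have "fst (lin \<alpha> \<beta> y u) < 0" by (simp add: mult_less_0_iff)
    then have "clamp u (lin \<alpha> \<beta> y u) = 0"
      using u0 by (intro clamp_eq_0) (simp add: less_eq_prod_def)
    then show ?thesis using eval Gamma_imp_top(1)[OF clamp_in[OF u0]] by simp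
  next
    case 2
    have "fst u < int s * D" using 2 u(2) mult_left_mono[of 1 D "int s"] by simp
    also have "\<dots> = fst (lin (a * s) (h * s) y u)" by (simp add: fst_lin D_def algebra_simps)
    finally have "clamp u (lin (a * s) (h * s) y u) = u"
      using u0 by (intro clamp_eq_top) (simp add: less_eq_prod_def)
    then show ?thesis using eval Gamma_imp_top(2)[OF clamp_in[OF u0]] by simp
  qed
qed

lemma slope_test_hit:
  assumes ab: "\<alpha> * h = a * \<beta> + 1" "h < a" and s: "0 < s"
  shows "heval (Gamma (int a, 0::int)) (int h, 0) (slope_test a h s \<alpha> \<beta>) = (int a - 1, 0)"
proof -
  have abi: "int \<alpha> * int h = int a * int \<beta> + 1" using ab(1)
    by (metis of_nat_mult of_nat_add of_nat_1)
  have lins: "lin \<alpha> \<beta> (int h, 0::int) (int a, 0) = (1, 0)"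
    "lin (a * s) (h * s) (int h, 0::int) (int a, 0) = 0"
    using abi by (simp_all add: prod_eq_iff fst_lin snd_lin algebra_simps zero_prod_def)
  have mem: "(int h, 0::int) \<in> {0..(int a, 0)}" using ab(2) by (simp add: zero_prod_def)
  have "heval (Gamma (int a, 0::int)) (int h, 0) (slope_test a h s \<alpha> \<beta>) =
      himp (Gamma (int a, 0)) (clamp (int a, 0) (lin \<alpha> \<beta> (int h, 0) (int a, 0)))
        (clamp (int a, 0) (lin (a * s) (h * s) (int h, 0) (int a, 0)))"
    by (rule heval_slope_test[OF mem ab s])
  also have "\<dots> = himp (Gamma (int a, 0)) (clamp (int a, 0) (1, 0)) (clamp (int a, 0) 0)"
    unfolding lins ..
  also have "\<dots> = (int a - 1, 0)"
    using ab(2) by (simp add: clamp_def Gamma_imp zero_prod_def min_def max_def)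
  finally show ?thesis .
qed

definition coprime_residues :: "nat \<Rightarrow> nat list" where
  "coprime_residues a = filter (coprime a) [1..<a]"

definition inverse_multipliers :: "nat \<Rightarrow> nat \<Rightarrow> (nat \<Rightarrow> nat) \<Rightarrow> (nat \<Rightarrow> nat) \<Rightarrow> bool" where
  "inverse_multipliers a s \<alpha> \<beta> \<longleftrightarrow>
     (\<forall>h\<in>set (coprime_residues a). \<alpha> h * h = a * \<beta> h + 1 \<and> s \<le> \<alpha> h)"

lemma inverse_multipliers_exist: "\<exists>\<alpha> \<beta>. inverse_multipliers a s \<alpha> \<beta>"
proof -
  have "\<exists>p. fst p * h = a * snd p + 1 \<and> s \<le> fst p" if "h \<in> set (coprime_residues a)" for h
  proof -
    have h: "0 < h" "h < a" "coprime h a"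
      using that by (auto simp: coprime_residues_def coprime_commute)
    then obtain x y where "h * x = a * y + 1" using bezout_nat[of h a] by auto
    then have "(x + a * s) * h = a * (y + h * s) + 1" by (simp add: algebra_simps)
    moreover have "s \<le> x + a * s" using h(2) by (cases a) auto
    ultimately show ?thesis by (intro exI[of _ "(x + a * s, y + h * s)"]) simp
  qed
  then obtain f where
    "\<forall>h\<in>set (coprime_residues a). fst (f h) * h = a * snd (f h) + 1 \<and> s \<le> fst (f h)"
    by metis
  then have "inverse_multipliers a s (fst \<circ> f) (snd \<circ> f)" by (simp add: inverse_multipliers_def)
  then show ?thesis by blast
qed

definition separating_term :: "nat \<Rightarrow> nat \<Rightarrow> (nat \<Rightarrow> nat) \<Rightarrow> (nat \<Rightarrow> nat) \<Rightarrow> hterm" where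
  "separating_term a s \<alpha> \<beta> = (if a = 1 then lin_term 2 0
     else foldr Mul (map (\<lambda>h. slope_test a h s (\<alpha> h) (\<beta> h)) (coprime_residues a)) Top)"

lemma separating_term_top:
  fixes u y :: "int \<times> int"
  assumes inv: "inverse_multipliers a s \<alpha> \<beta>" and a: "a \<noteq> 1" and y: "y \<in> {0..u}"
    and u: "1 \<le> fst u" "fst u < int s"
    and ne: "\<forall>h\<in>set (coprime_residues a). fst y * int a \<noteq> int h * fst u"
  shows "heval (Gamma u) y (separating_term a s \<alpha> \<beta>) = u"
proof -
  have factor: "heval (Gamma u) y (slope_test a h s (\<alpha> h) (\<beta> h)) = u"
    if h: "h \<in> set (coprime_residues a)" for h
  proof (rule slope_test_top[OF y])
    show "\<alpha> h * h = a * \<beta> h + 1" "fst u < int (\<alpha> h)"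
      using inv h u(2) by (auto simp: inverse_multipliers_def)
    show "h < a" using h by (simp add: coprime_residues_def)
  qed (use u ne h in auto)
  have "heval (Gamma u) y
      (foldr Mul (map (\<lambda>h. slope_test a h s (\<alpha> h) (\<beta> h)) (coprime_residues a)) Top) = u"
    by (rule heval_Mul_list_top[OF y]) (use factor in auto)
  then show ?thesis using a by (simp add: separating_term_def)
qed

lemma separating_term_hit:
  assumes inv: "inverse_multipliers a s \<alpha> \<beta>" and h0: "h0 \<in> set (coprime_residues a)" and s: "a < s"
  shows "heval (Gamma (int a, 0::int)) (int h0, 0) (separating_term a s \<alpha> \<beta>) = (int a - 1, 0)"
proof -
  have h0a: "0 < h0" "h0 < a" using h0 by (auto simp: coprime_residues_def)
  have y: "(int h0, 0::int) \<in> {0..(int a, 0)}" using h0a by (simp add: zero_prod_def)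
  have "heval (Gamma (int a, 0::int)) (int h0, 0) (slope_test a h s (\<alpha> h) (\<beta> h)) =
      (if h = h0 then (int a - 1, 0) else (int a, 0))" if h: "h \<in> set (coprime_residues a)" for h
  proof -
    have ab: "\<alpha> h * h = a * \<beta> h + 1" "s \<le> \<alpha> h" "h < a"
      using inv h by (auto simp: inverse_multipliers_def coprime_residues_def)
    show ?thesis
    proof (cases "h = h0")
      case True then show ?thesis using slope_test_hit[OF ab(1,3)] s ab by simp
    next
      case False
      have "int h0 * int a \<noteq> int h * int a" using False h0a by simp
      then show ?thesis using False slope_test_top[OF y ab(1,3)] s ab h0a by simp
    qed
  qed
  moreover have "a \<noteq> 1" using h0a by simp
  moreover have "distinct (coprime_residues a)" by (simp add: coprime_residues_def)
  ultimately show ?thesis using h0 y h0a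
    by (simp add: separating_term_def, intro heval_Mul_list_single) (auto simp: zero_prod_def)
qed

lemma separating_term_unit:
  "heval (Gamma (1::int, 0::int)) (0, 0) (separating_term 1 s \<alpha> \<beta>) = (0, 0)"
  "heval (Gamma (1::int, 0::int)) (1, -1) (separating_term 1 s \<alpha> \<beta>) = (1, 0)"
proof -
  have "(0::int, 0::int) \<in> {0..(1, 0)}" "(1::int, -1::int) \<in> {0..(1, 0)}"
    by (simp_all add: zero_prod_def)
  from this[THEN heval_lin_term, of 0 2] show
    "heval (Gamma (1::int, 0::int)) (0, 0) (separating_term 1 s \<alpha> \<beta>) = (0, 0)"
    "heval (Gamma (1::int, 0::int)) (1, -1) (separating_term 1 s \<alpha> \<beta>) = (1, 0)"
    by (simp_all add: separating_term_def zero_prod_def clamp_def lin_Pair)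
qed

section \<open>The coordinates of \<open>B\<^sub>\<Delta>\<close>\<close>

lemma heval_prod_alg:
  assumes "\<And>d. d \<notin> D \<Longrightarrow> g d = (0, 0)"
  shows "heval (prod_alg D) g t d = (if d \<in> D then heval (comp_alg d) (g d) t else (0, 0))"
  by (induction t) (simp_all add: prod_alg_def assms)

lemma heval_Luk:
  assumes "y \<in> hcarrier (Luk k)"
  shows "heval (Luk k) y t = heval (Gamma (int k, 0)) y t"
proof -
  have "hoop_hom (Luk k) (Gamma (int k, 0)) id"
    unfolding hoop_hom_def
  proof (intro conjI ballI)
    fix x x' assume "x \<in> hcarrier (Luk k)" "x' \<in> hcarrier (Luk k)"
    then obtain m m' where "x = (m, 0)" "x' = (m', 0)" by (auto simp: Luk_def)
    then show "id (hmult (Luk k) x x') = hmult (Gamma (int k, 0)) (id x) (id x')"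
      "id (himp (Luk k) x x') = himp (Gamma (int k, 0)) (id x) (id x')"
      by (simp_all add: Luk_def Gamma_mult Gamma_imp max_def min_def zero_prod_def)
  qed (auto simp: Luk_def zero_prod_def)
  moreover have "hmult (Luk k) x x' \<in> hcarrier (Luk k) \<and> himp (Luk k) x x' \<in> hcarrier (Luk k)"
    if "x \<in> hcarrier (Luk k)" "x' \<in> hcarrier (Luk k)" for x x'
    using that by (auto simp: Luk_def)
  ultimately show ?thesis using heval_hoop_hom[OF _ _ assms] by (metis id_apply)
qed

text \<open>\<open>C\<^sub>\<omega>\<close> sits in \<open>\<Gamma>(\<int> \<times>\<^sub>l \<int>, (1, 0))\<close> as the infinitesimal elements \<open>(1, z)\<close>.\<close>

lemma heval_Comega:
  assumes "y \<in> hcarrier Comega"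
  shows "heval Comega y t \<in> hcarrier Comega \<and>
    (1::int, fst (heval Comega y t)) = heval (Gamma (1, 0)) (1, fst y) t"
proof -
  have "hoop_hom Comega (Gamma (1, 0)) (\<lambda>v. (1::int, fst v))"
    unfolding hoop_hom_def
  proof (intro conjI ballI)
    fix x x' assume "x \<in> hcarrier Comega" "x' \<in> hcarrier Comega"
    then obtain z z' where "x = (z, 0)" "x' = (z', 0)" "z \<le> 0" "z' \<le> 0" by (auto simp: Comega_def)
    then show "(1::int, fst (hmult Comega x x')) = hmult (Gamma (1, 0)) (1, fst x) (1, fst x')"
      "(1::int, fst (himp Comega x x')) = himp (Gamma (1, 0)) (1, fst x) (1, fst x')"
      by (simp_all add: Comega_def Gamma_mult Gamma_imp max_def min_def zero_prod_def)
  qed (auto simp: Comega_def zero_prod_def)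
  moreover have "hmult Comega x x' \<in> hcarrier Comega \<and> himp Comega x x' \<in> hcarrier Comega"
    if "x \<in> hcarrier Comega" "x' \<in> hcarrier Comega" for x x'
    using that by (auto simp: Comega_def)
  ultimately show ?thesis using heval_hoop_hom[OF _ _ assms] by blast
qed

lemma Delta_cases:
  assumes "d \<in> Delta I J K"
  obtains (Luk) k h where "d = (k, h, 2)" "k \<in> divdown I" "h < k" "coprime k h"
  | (Luk2) k h i where "d = (k, h, i)" "i = 0 \<or> i = 1" "k \<in> divdown J" "h < k" "coprime k h"
  | (Comega) "d = (0, 0, 3)" "Omega \<in> K"
  using assms unfolding Delta_def by (auto split: if_splits)

lemma reduced_divisor_bounds:
  assumes "reduced I J K" "k dvd m" "m \<in> I \<union> J"
  shows "1 \<le> k" "k \<le> Max (I \<union> J)"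
proof -
  have "0 < m" "finite (I \<union> J)" using assms by (auto simp: reduced_def)
  then show "1 \<le> k" "k \<le> Max (I \<union> J)"
    using assms(2,3) by (auto dest: dvd_imp_le intro: Max_ge le_trans simp: Suc_le_eq dvd_pos_nat)
qed

lemma reduced_dvd_I: "reduced I J K \<Longrightarrow> a \<in> I \<Longrightarrow> m \<in> I \<Longrightarrow> a dvd m \<Longrightarrow> m = a"
  and reduced_not_dvd_J: "reduced I J K \<Longrightarrow> a \<in> I \<Longrightarrow> m \<in> J \<Longrightarrow> \<not> a dvd m"
  by (auto simp: reduced_def)

lemma gbar_in_comp_alg:
  assumes "reduced I J K" "d \<in> Delta I J K"
  shows "gbar (Delta I J K) d \<in> hcarrier (comp_alg d)"
  using assms(2)
proof (cases rule: Delta_cases)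
  case (Luk2 k h i)
  obtain m where "m \<in> J" "k dvd m" using Luk2(3) by (auto simp: divdown_def)
  then have "1 \<le> k" using reduced_divisor_bounds[OF assms(1)] by blast
  then have g: "gen_el k h \<in> {0..(int k, int h)}"
    using gen_el_in_Luk2 Luk2 by (fastforce simp: Luk2_eq_Gamma)
  then have "neg_lex k h (gen_el k h) \<in> {0..(int k, int h)}"
    by (cases "gen_el k h") (auto simp: neg_lex_def Luk2_eq_Gamma Gamma_imp zero_prod_def min_def)
  then show ?thesis using Luk2 g assms(2) by (auto simp: gbar_def comp_alg_def Luk2_eq_Gamma)
qed (use assms in \<open>auto simp: gbar_def comp_alg_def Luk_def Comega_def\<close>)

lemma coprime_slope_dvd: "y * int a = int h * int k \<Longrightarrow> coprime a h \<Longrightarrow> a dvd k"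
  by (metis coprime_dvd_mult_right_iff dvd_triv_right int_dvd_int_iff of_nat_mult coprime_int_iff
      mult.commute dvdI)

lemma separating_term_at_Luk:
  assumes red: "reduced I J K" and aI: "a \<in> I" and inv: "inverse_multipliers a s \<alpha> \<beta>"
    and s: "Max (I \<union> J) < s" and k: "k \<in> divdown I" "h < k" "coprime k h"
  shows "heval (Luk k) (int h, 0) (separating_term a s \<alpha> \<beta>) =
    (if k = a then (int a - 1, 0) else (int k, 0))"
proof -
  obtain m where m: "m \<in> I" "k dvd m" using k(1) by (auto simp: divdown_def)
  have kb: "1 \<le> k" "k < s" using reduced_divisor_bounds[OF red m(2)] m(1) s by auto
  have y: "(int h, 0) \<in> hcarrier (Luk k)" using k by (simp add: Luk_def)
  have ys: "(int h, 0::int) \<in> {0..(int k, 0)}" using k by (simp add: zero_prod_def)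
  show ?thesis
  proof (cases "k = a")
    case ka: True
    show ?thesis
    proof (cases "a = 1")
      case True
      then have "h = 0" using ka k by simp
      then show ?thesis using ka True heval_Luk[OF y] separating_term_unit(1) by simp
    next
      case False
      have "h \<noteq> 0"
      proof
        assume "h = 0"
        then have "coprime a 0" using k ka by simp
        then show False using False by simp
      qed
      then have "h \<in> set (coprime_residues a)" using k ka by (simp add: coprime_residues_def)
      then show ?thesis using ka kb heval_Luk[OF y] separating_term_hit[OF inv] by simp
    qed
  next
    case False
    have "a \<noteq> 1"
    proof
      assume "a = 1"
      then have "m = 1" using reduced_dvd_I[OF red aI m(1)] by simp
      then show False using m(2) False \<open>a = 1\<close> by simp
    qed
    have "fst (int h, 0::int) * int a \<noteq> int h' * fst (int k, 0::int)"
      if "h' \<in> set (coprime_residues a)" for h'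
    proof
      assume "fst (int h, 0::int) * int a = int h' * fst (int k, 0::int)"
      then have "a dvd k" using that coprime_slope_dvd[of "int h" a h' k]
        by (simp add: coprime_residues_def)
      then have "m = a" using reduced_dvd_I[OF red aI m(1)] m(2) dvd_trans by blast
      then show False using \<open>a dvd k\<close> m(2) False dvd_antisym by blast
    qed
    then show ?thesis
      using False kb heval_Luk[OF y] separating_term_top[OF inv \<open>a \<noteq> 1\<close> ys] by simp
  qed
qed

lemma separating_term_at_Luk2:
  assumes red: "reduced I J K" and aI: "a \<in> I" and inv: "inverse_multipliers a s \<alpha> \<beta>"
    and s: "Max (I \<union> J) < s" and k: "k \<in> divdown J" and y: "y \<in> hcarrier (Luk2 k h)"
  shows "heval (Luk2 k h) y (separating_term a s \<alpha> \<beta>) = (int k, int h)"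
proof -
  obtain m where m: "m \<in> J" "k dvd m" using k by (auto simp: divdown_def)
  have kb: "1 \<le> k" "k < s" using reduced_divisor_bounds[OF red m(2)] m(1) s by auto
  have "a \<noteq> 1" using reduced_not_dvd_J[OF red aI m(1)] by auto
  have "fst y * int a \<noteq> int h' * fst (int k, int h)" if "h' \<in> set (coprime_residues a)" for h'
  proof
    assume "fst y * int a = int h' * fst (int k, int h)"
    then have "a dvd k" using that coprime_slope_dvd[of "fst y" a h' k]
      by (simp add: coprime_residues_def)
    then show False using reduced_not_dvd_J[OF red aI m(1)] m(2) dvd_trans by blast
  qed
  then show ?thesis
    using kb y separating_term_top[OF inv \<open>a \<noteq> 1\<close>] by (simp add: Luk2_eq_Gamma)
qed

lemma separating_term_at_Comega:
  assumes red: "reduced I J K" and aI: "a \<in> I" and inv: "inverse_multipliers a s \<alpha> \<beta>"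
    and s: "Max (I \<union> J) < s"
  shows "heval Comega (-1, 0) (separating_term a s \<alpha> \<beta>) = (0, 0)"
proof -
  have "(-1, 0) \<in> hcarrier Comega" by (simp add: Comega_def)
  note transfer = heval_Comega[OF this, of "separating_term a s \<alpha> \<beta>"]
  have "1 \<le> a" "a < s" using reduced_divisor_bounds[OF red dvd_refl, of a] aI s by auto
  have "heval (Gamma (1, 0)) (1::int, -1::int) (separating_term a s \<alpha> \<beta>) = (1, 0)"
  proof (cases "a = 1")
    case True then show ?thesis using separating_term_unit(2) by simp
  next
    case False
    have "(1::int, -1::int) \<in> {0..(1, 0)}" by (simp add: zero_prod_def)
    moreover have
      "\<forall>h\<in>set (coprime_residues a). fst (1::int, -1::int) * int a \<noteq> int h * fst (1::int, 0::int)"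
      by (auto simp: coprime_residues_def)
    ultimately show ?thesis
      using separating_term_top[OF inv False] \<open>a < s\<close> \<open>1 \<le> a\<close> by simp
  qed
  then show ?thesis using transfer by (auto simp: Comega_def)
qed

definition luk_coords :: "nat \<Rightarrow> (nat \<times> nat \<times> nat) set" where
  "luk_coords a = {(a, h, 2) | h. h < a \<and> coprime a h}"

lemma separating_term_at_coordinate:
  assumes red: "reduced I J K" and aI: "a \<in> I" and inv: "inverse_multipliers a s \<alpha> \<beta>"
    and s: "Max (I \<union> J) < s" and d: "d \<in> Delta I J K"
  shows "heval (comp_alg d) (gbar (Delta I J K) d) (separating_term a s \<alpha> \<beta>) =
    (if d \<in> luk_coords a then (int a - 1, 0) else hone (comp_alg d))"
  using d
proof (cases rule: Delta_cases)
  case (Luk k h)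
  then show ?thesis using separating_term_at_Luk[OF red aI inv s Luk(2-4)] d
    by (auto simp: gbar_def comp_alg_def luk_coords_def Luk_def)
next
  case (Luk2 k h i)
  have "gbar (Delta I J K) d \<in> hcarrier (Luk2 k h)"
    using gbar_in_comp_alg[OF red d] Luk2 by (auto simp: comp_alg_def)
  then show ?thesis using separating_term_at_Luk2[OF red aI inv s Luk2(3)] Luk2
    by (auto simp: comp_alg_def luk_coords_def Luk2_eq_Gamma)
next
  case Comega
  then show ?thesis using separating_term_at_Comega[OF red aI inv s] d
    by (simp add: gbar_def comp_alg_def luk_coords_def Comega_def)
qed

definition coord_lift :: "(nat \<times> nat \<times> nat) set \<Rightarrow> (nat \<times> nat \<times> nat) set \<Rightarrow> nat \<Rightarrow>
    nat \<times> nat \<times> nat \<Rightarrow> int \<times> int" where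
  "coord_lift D E m d = (if d \<in> D then if d \<in> E then (int m, 0) else hone (comp_alg d) else (0, 0))"

lemma comp_alg_one_idem:
  "hmult (comp_alg d) (hone (comp_alg d)) (hone (comp_alg d)) = hone (comp_alg d)"
  "himp (comp_alg d) (hone (comp_alg d)) (hone (comp_alg d)) = hone (comp_alg d)"
  by (simp_all add: comp_alg_def Luk2_eq_Gamma Gamma_mult Gamma_imp Luk_def Comega_def zero_prod_def
      max_def split: prod.split)

lemma coord_lift_top:
  assumes "\<And>d. d \<in> E \<Longrightarrow> comp_alg d = Luk a"
  shows "coord_lift D E a = hone (prod_alg D)"
  using assms by (auto simp: fun_eq_iff coord_lift_def prod_alg_def Luk_def)

lemma coord_lift_ops:
  assumes "\<And>d. d \<in> E \<Longrightarrow> comp_alg d = Luk a" and "m \<le> a" "m' \<le> a"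
  shows "hmult (prod_alg D) (coord_lift D E m) (coord_lift D E m') = coord_lift D E (m + m' - a)"
    and "himp (prod_alg D) (coord_lift D E m) (coord_lift D E m') =
      coord_lift D E (min (a - m + m') a)"
  using assms comp_alg_one_idem
  by (auto simp: fun_eq_iff coord_lift_def prod_alg_def Luk_def of_nat_diff max_def min_def)

lemma coord_lift_in_hgen:
  assumes E: "\<And>d. d \<in> E \<Longrightarrow> comp_alg d = Luk a"
    and gen: "coord_lift D E (a - 1) \<in> hgen (prod_alg D) X" and m: "m \<le> a"
  shows "coord_lift D E m \<in> hgen (prod_alg D) X"
proof -
  have "coord_lift D E (a - j) \<in> hgen (prod_alg D) X" if "j \<le> a" for j
    using that
  proof (induction j)
    case 0 then show ?case using coord_lift_top[OF E] hgen.one[of "prod_alg D" X] by simp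
  next
    case (Suc j)
    then have
      "hmult (prod_alg D) (coord_lift D E (a - 1)) (coord_lift D E (a - j)) \<in> hgen (prod_alg D) X"
      using gen by (auto intro: hgen.mult)
    then show ?case using coord_lift_ops(1)[OF E, where m = "a - 1" and m' = "a - j"] Suc.prems
      by simp
  qed
  from this[of "a - m"] show ?thesis using m by simp
qed

lemma coord_lift_embedding:
  assumes gen: "coord_lift D E (a - 1) \<in> hgen (prod_alg D) X"
    and E: "E \<subseteq> D" "e \<in> E" "\<And>d. d \<in> E \<Longrightarrow> comp_alg d = Luk a"
  shows "hoop_embeddable (Luk a) (subalg_gen (prod_alg D) X)"
proof -
  define f where "f v = coord_lift D E (nat (fst v))" for v :: "int \<times> int"
  have carrier: "hcarrier (Luk a) = {(int m, 0) | m. m \<le> a}"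
    by (auto simp: Luk_def) (metis nat_int nat_le_iff nonneg_int_cases)
  have "inj_on f (hcarrier (Luk a))"
  proof (rule inj_onI)
    fix v w assume "v \<in> hcarrier (Luk a)" "w \<in> hcarrier (Luk a)" and eq: "f v = f w"
    then obtain m m' where "v = (int m, 0)" "w = (int m', 0)" unfolding carrier by auto
    moreover have "coord_lift D E m e = coord_lift D E m' e" using eq calculation
      by (simp add: f_def)
    ultimately show "v = w" using E(1,2) by (auto simp: coord_lift_def)
  qed
  moreover have "hoop_hom (Luk a) (subalg_gen (prod_alg D) X) f"
    unfolding hoop_hom_def
  proof (intro conjI ballI)
    show "f ` hcarrier (Luk a) \<subseteq> hcarrier (subalg_gen (prod_alg D) X)"
      using coord_lift_in_hgen[OF E(3) gen] by (auto simp: carrier f_def subalg_gen_def)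
    show "f (hone (Luk a)) = hone (subalg_gen (prod_alg D) X)"
      using coord_lift_top[OF E(3)] by (simp add: f_def Luk_def subalg_gen_def)
    fix v w assume "v \<in> hcarrier (Luk a)" "w \<in> hcarrier (Luk a)"
    then obtain m m' where vw: "v = (int m, 0)" "w = (int m', 0)" "m \<le> a" "m' \<le> a"
      unfolding carrier by auto
    then have "nat (fst (hmult (Luk a) v w)) = m + m' - a"
      "nat (fst (himp (Luk a) v w)) = min (a - m + m') a"
      by (simp_all add: Luk_def max_def min_def) linarith+
    then show "f (hmult (Luk a) v w) = hmult (subalg_gen (prod_alg D) X) (f v) (f w)"
      "f (himp (Luk a) v w) = himp (subalg_gen (prod_alg D) X) (f v) (f w)"
      using coord_lift_ops[OF E(3) vw(3,4)] vw(1,2) by (simp_all add: f_def subalg_gen_def)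
  qed
  ultimately show ?thesis unfolding hoop_embeddable_iff by blast
qed

lemma gbar_in_prod_alg: "reduced I J K \<Longrightarrow> gbar (Delta I J K) \<in> hcarrier (prod_alg (Delta I J K))"
  using gbar_in_comp_alg by (auto simp: prod_alg_def gbar_def)

lemma heval_separating_term_gbar:
  assumes red: "reduced I J K" and aI: "a \<in> I" and inv: "inverse_multipliers a s \<alpha> \<beta>"
    and s: "Max (I \<union> J) < s"
  shows "heval (prod_alg (Delta I J K)) (gbar (Delta I J K)) (separating_term a s \<alpha> \<beta>) =
    coord_lift (Delta I J K) (luk_coords a) (a - 1)"
proof
  fix d
  have "1 \<le> a" using red aI by (auto simp: reduced_def Suc_le_eq)
  moreover have "gbar (Delta I J K) d = (0, 0)" if "d \<notin> Delta I J K" for d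
    using that by (simp add: gbar_def)
  ultimately show "heval (prod_alg (Delta I J K)) (gbar (Delta I J K)) (separating_term a s \<alpha> \<beta>) d =
      coord_lift (Delta I J K) (luk_coords a) (a - 1) d"
    using separating_term_at_coordinate[OF red aI inv s, of d]
    by (simp add: heval_prod_alg coord_lift_def of_nat_diff)
qed

theorem theorem3p10:
  fixes I J :: "nat set" and K :: "omega set" and a :: nat
  assumes "reduced I J K" and "a \<in> I"
  shows "hoop_embeddable (Luk a) (B_Delta I J K)"
proof -
  define s where "s = Suc (Max (I \<union> J))"
  obtain \<alpha> \<beta> where inv: "inverse_multipliers a s \<alpha> \<beta>" using inverse_multipliers_exist by blast
  have "Max (I \<union> J) < s" by (simp add: s_def)
  have "heval (prod_alg (Delta I J K)) (gbar (Delta I J K)) (separating_term a s \<alpha> \<beta>)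
      \<in> hgen (prod_alg (Delta I J K)) {gbar (Delta I J K)}"
    using heval_in_hgen[OF hgen.base[OF singletonI gbar_in_prod_alg[OF assms(1)]]] .
  then have "coord_lift (Delta I J K) (luk_coords a) (a - 1)
      \<in> hgen (prod_alg (Delta I J K)) {gbar (Delta I J K)}"
    unfolding heval_separating_term_gbar[OF assms inv \<open>Max (I \<union> J) < s\<close>] .
  moreover have "a \<in> divdown I" using assms(2) by (auto simp: divdown_def intro: bexI[of _ a])
  then have "luk_coords a \<subseteq> Delta I J K" by (auto simp: luk_coords_def Delta_def)
  moreover have "0 < a" using assms by (auto simp: reduced_def gr0I)
  then have "(a, a - 1, 2) \<in> luk_coords a" using coprime_diff_one_right_nat
    by (simp add: luk_coords_def)
  moreover have "comp_alg d = Luk a" if "d \<in> luk_coords a" for d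
    using that by (auto simp: luk_coords_def comp_alg_def)
  ultimately show ?thesis unfolding B_Delta_def by (rule coord_lift_embedding)
qed

end
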